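(* Assume $\langle f\rangle_X=0$ and that $\psi$ satisfies (A1) and (A2); let $u^H$ be the solution of the HQC problem, $u^{H,c}$ its reconstruction, and $\hat u^{H,c}(X_i)=u^H(X_i)+\epsilon\chi(X_i,X_i/\epsilon)Du^H(X_i)$. Then there exist constants $C_{13},C_{14}$, depending only on $c_\psi,C_\psi,C'_\psi$ and $p$ (independent of $\epsilon$, $H$, $f$), such that \[ |\hat u^{H,c}-u^{H,c}|_{H^1}\le C_{13}H|f|_{H^{-1}},\qquad \|\hat u^{H,c}-u^{H,c}\|_{L^2}\le C_{14}\,\epsilon H|f|_{H^{-1}}. \]
   Context: Let $\epsilon>0$, $N,p$ positive integers with $N/p\in\mathbb N$ and normalization $N\epsilon=1$; $X_i=\epsilon i$, $Y_j=j$. $U^N_{\rm per}(\epsilon\mathbb Z)$: functions $u:\epsilon\mathbb Z\to\mathbb R$ with $u(X_{i+N})=u(X_i)$; $U^N_\#(\epsilon\mathbb Z)$: those with $\langle u\rangle_X:=\frac1N\sum_{i=1}^Nu(X_i)=0$. $\langle u,v\rangle_X=\frac1N\sum_{i=1}^Nu(X_i)v(X_i)$, $Du(X_i)=(u(X_{i+1})-u(X_i))/\epsilon$, $\|u\|_{L^2}=\langle u,u\rangle_X^{1/2}$, $|u|_{H^1}=\|Du\|_{L^2}$, $|u|_{H^{-1}}=\sup\{\langle u,w\rangle_X/|w|_{H^1}:0\ne w\in U^N_\#(\epsilon\mathbb Z)\}$. $U^p_\#(\epsilon\mathbb Z)$: $p$-periodic functions on $\epsilon\mathbb Z$ with $\sum_{i=1}^pw(X_i)=0$.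 Two-scale functions $g:\epsilon\mathbb Z\times\mathbb Z\to\mathbb R$ satisfy $g(X_{i+N},Y_j)=g(X_i,Y_j)=g(X_i,Y_{j+p})$; $D_Xg(X_i,Y_j)=(g(X_{i+1},Y_j)-g(X_i,Y_j))/\epsilon$, $D_Yg(X_i,Y_j)=g(X_i,Y_{j+1})-g(X_i,Y_j)$, $\|g\|_{L^\infty(N,p)}=\max_{1\le i\le N,1\le j\le p}|g|$. $\psi$ is a two-scale function with (A1) $0<c_\psi\le\psi\le C_\psi$ and (A2) $\|D_X\psi\|_{L^\infty(N,p)}\le C'_\psi$. Cell solution $\chi$: two-scale with $\frac1p\sum_{j=1}^p\chi(X_i,Y_j)=0$ and $-D_Y(\psi D_Y\chi)=D_Y\psi$ everywhere. $f\in U^N_{\rm per}(\epsilon\mathbb Z)$. HQC method: indices $1=i_1<\dots<i_K\le N$, $i_{K+1}=N+1$, $S_k=\{X_i:i_k\le i<i_{k+1}\}$, $H_k=\epsilon(i_{k+1}-i_k)$, $H=\max_kH_k$. $U^H_{\rm per}$: $v\in U^N_{\rm per}(\epsilon\mathbb Z)$ affine on each $\{X_i:i_k\le i\le i_{k+1}\}$; $U^H_\#=U^H_{\rm per}\cap U^N_\#(\epsilon\mathbb Z)$. Sampling domains $S_k^{\rm rep}=\{X_i:i_k^{\rm rep}\le i<i_k^{\rm rep}+p\}\subset S_k$, collocation indices with $X_{i_k^{\rm coll}}\in S_k^{\rm rep}$, $\psi^\epsilon_{{\rm coll},k}(X_i)=\psi(X_{i_k^{\rm coll}},X_i/\epsilon)$,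 $\langle a,b\rangle_{S_k^{\rm rep}}=\frac1p\sum_{X_i\in S_k^{\rm rep}}a(X_i)b(X_i)$. For $v^H\in U^H_{\rm per}$ let $\ell_k$ be the affine function on $\epsilon\mathbb Z$ equal to $v^H$ on $S_k$; $\mathcal R_k(v^H)=\ell_k+w_k$ with $w_k\in U^p_\#(\epsilon\mathbb Z)$ such that $\langle\psi^\epsilon_{{\rm coll},k}D(\ell_k+w_k),Ds\rangle_{S_k^{\rm rep}}=0$ for all $s\in U^p_\#(\epsilon\mathbb Z)$. HQC problem: $u^H\in U^H_\#$ with $\sum_{k=1}^KH_k\langle\psi^\epsilon_{{\rm coll},k}D\mathcal R_k(u^H),D\mathcal R_k(v^H)\rangle_{S_k^{\rm rep}}=\langle f,v^H\rangle_X$ for all $v^H\in U^H_\#$. Reconstruction: $u^{H,c}(X_i)=u^H(X_i)+w_k(X_i)$ for $X_i\in S_k$, with $w_k=\mathcal R_k(u^H)-\ell_k$ computed for $u^H$. *)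

theory Defs
  imports Complex_Main
begin

text \<open>Grid functions on eps*Z are represented as int => real, with u i standing for u(X_i).
Two-scale functions are int => int => real, g i j standing for g(X_i, Y_j).
Note X_i / eps = i.\<close>

definition per :: "nat \<Rightarrow> (int \<Rightarrow> real) \<Rightarrow> bool" where
  "per N u \<longleftrightarrow> (\<forall>i. u (i + int N) = u i)"

definition avgX :: "nat \<Rightarrow> (int \<Rightarrow> real) \<Rightarrow> real" where
  "avgX N u = (\<Sum>i = 1..int N. u i) / real N"

definition innerX :: "nat \<Rightarrow> (int \<Rightarrow> real) \<Rightarrow> (int \<Rightarrow> real) \<Rightarrow> real" where
  "innerX N u v = (\<Sum>i = 1..int N. u i * v i) / real N"

definition Dd :: "real \<Rightarrow> (int \<Rightarrow> real) \<Rightarrow> int \<Rightarrow> real" where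
  "Dd \<epsilon> u i = (u (i + 1) - u i) / \<epsilon>"

definition L2n :: "nat \<Rightarrow> (int \<Rightarrow> real) \<Rightarrow> real" where
  "L2n N u = sqrt (innerX N u u)"

definition H1s :: "nat \<Rightarrow> real \<Rightarrow> (int \<Rightarrow> real) \<Rightarrow> real" where
  "H1s N \<epsilon> u = L2n N (Dd \<epsilon> u)"

text \<open>The supremum is over nonzero mean-zero N-periodic w; 0 is inserted
so that the (degenerate, N = 1) empty case gives 0; for N >= 2 this changes nothing since
the set is symmetric under w -> -w.\<close>
definition Hm1 :: "nat \<Rightarrow> real \<Rightarrow> (int \<Rightarrow> real) \<Rightarrow> real" where
  "Hm1 N \<epsilon> u = Sup (insert 0 {innerX N u w / H1s N \<epsilon> w | w.
       per N w \<and> avgX N w = 0 \<and> w \<noteq> (\<lambda>_. 0)})"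

definition Up_sharp :: "nat \<Rightarrow> (int \<Rightarrow> real) \<Rightarrow> bool" where
  "Up_sharp p w \<longleftrightarrow> per p w \<and> (\<Sum>i = 1..int p. w i) = 0"

definition two_scale :: "nat \<Rightarrow> nat \<Rightarrow> (int \<Rightarrow> int \<Rightarrow> real) \<Rightarrow> bool" where
  "two_scale N p g \<longleftrightarrow> (\<forall>i j. g (i + int N) j = g i j \<and> g i (j + int p) = g i j)"

definition DX :: "real \<Rightarrow> (int \<Rightarrow> int \<Rightarrow> real) \<Rightarrow> int \<Rightarrow> int \<Rightarrow> real" where
  "DX \<epsilon> g i j = (g (i + 1) j - g i j) / \<epsilon>"

definition DY :: "(int \<Rightarrow> int \<Rightarrow> real) \<Rightarrow> int \<Rightarrow> int \<Rightarrow> real" where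
  "DY g i j = g i (j + 1) - g i j"

definition Linf :: "nat \<Rightarrow> nat \<Rightarrow> (int \<Rightarrow> int \<Rightarrow> real) \<Rightarrow> real" where
  "Linf N p g = Max {\<bar>g i j\<bar> | i j. i \<in> {1..int N} \<and> j \<in> {1..int p}}"

definition cell_sol :: "nat \<Rightarrow> nat \<Rightarrow> (int \<Rightarrow> int \<Rightarrow> real) \<Rightarrow> (int \<Rightarrow> int \<Rightarrow> real) \<Rightarrow> bool" where
  "cell_sol N p \<psi> \<chi> \<longleftrightarrow> two_scale N p \<chi>
     \<and> (\<forall>i. (\<Sum>j = 1..int p. \<chi> i j) / real p = 0)
     \<and> (\<forall>i j. - DY (\<lambda>i' j'. \<psi> i' j' * DY \<chi> i' j') i j = DY \<psi> i j)"

definition mesh :: "nat \<Rightarrow> nat \<Rightarrow> (nat \<Rightarrow> int) \<Rightarrow> bool" where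
  "mesh N K idx \<longleftrightarrow> K \<ge> 1 \<and> idx 1 = 1 \<and> (\<forall>k\<in>{1..K}. idx k < idx (k + 1))
     \<and> idx K \<le> int N \<and> idx (K + 1) = int N + 1"

definition Hk :: "real \<Rightarrow> (nat \<Rightarrow> int) \<Rightarrow> nat \<Rightarrow> real" where
  "Hk \<epsilon> idx k = \<epsilon> * real_of_int (idx (k + 1) - idx k)"

definition Hmax :: "real \<Rightarrow> nat \<Rightarrow> (nat \<Rightarrow> int) \<Rightarrow> real" where
  "Hmax \<epsilon> K idx = Max (Hk \<epsilon> idx ` {1..K})"

definition UH_per :: "nat \<Rightarrow> nat \<Rightarrow> (nat \<Rightarrow> int) \<Rightarrow> (int \<Rightarrow> real) \<Rightarrow> bool" where
  "UH_per N K idx v \<longleftrightarrow> per N v \<and> (\<forall>k\<in>{1..K}. \<exists>a b::real. \<forall>i.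
      idx k \<le> i \<and> i \<le> idx (k + 1) \<longrightarrow> v i = a + b * real_of_int i)"

definition UH_sharp :: "nat \<Rightarrow> nat \<Rightarrow> (nat \<Rightarrow> int) \<Rightarrow> (int \<Rightarrow> real) \<Rightarrow> bool" where
  "UH_sharp N K idx v \<longleftrightarrow> UH_per N K idx v \<and> avgX N v = 0"

definition sampling :: "nat \<Rightarrow> nat \<Rightarrow> (nat \<Rightarrow> int) \<Rightarrow> (nat \<Rightarrow> int) \<Rightarrow> (nat \<Rightarrow> int) \<Rightarrow> bool" where
  "sampling p K idx rep coll \<longleftrightarrow> (\<forall>k\<in>{1..K}. idx k \<le> rep k \<and> rep k + int p \<le> idx (k + 1)
      \<and> rep k \<le> coll k \<and> coll k < rep k + int p)"

definition lin :: "(nat \<Rightarrow> int) \<Rightarrow> (int \<Rightarrow> real) \<Rightarrow> nat \<Rightarrow> int \<Rightarrow> real" where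
  "lin idx v k i = v (idx k) + (v (idx (k + 1)) - v (idx k)) / real_of_int (idx (k + 1) - idx k)
      * real_of_int (i - idx k)"

definition innerRep :: "nat \<Rightarrow> int \<Rightarrow> (int \<Rightarrow> real) \<Rightarrow> (int \<Rightarrow> real) \<Rightarrow> real" where
  "innerRep p r a b = (\<Sum>i = r..r + int p - 1. a i * b i) / real p"

text \<open>psi_coll,k (X_i) = psi(X_{coll k}, X_i/eps) = psi (coll k) i.\<close>
definition corr :: "real \<Rightarrow> nat \<Rightarrow> (int \<Rightarrow> int \<Rightarrow> real) \<Rightarrow> (nat \<Rightarrow> int) \<Rightarrow> (nat \<Rightarrow> int)
     \<Rightarrow> (nat \<Rightarrow> int) \<Rightarrow> (int \<Rightarrow> real) \<Rightarrow> nat \<Rightarrow> int \<Rightarrow> real" where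
  "corr \<epsilon> p \<psi> idx rep coll v k = (THE w. Up_sharp p w \<and> (\<forall>s. Up_sharp p s \<longrightarrow>
      innerRep p (rep k) (\<lambda>i. \<psi> (coll k) i * Dd \<epsilon> (\<lambda>i'. lin idx v k i' + w i') i) (Dd \<epsilon> s) = 0))"

definition Rk :: "real \<Rightarrow> nat \<Rightarrow> (int \<Rightarrow> int \<Rightarrow> real) \<Rightarrow> (nat \<Rightarrow> int) \<Rightarrow> (nat \<Rightarrow> int)
     \<Rightarrow> (nat \<Rightarrow> int) \<Rightarrow> (int \<Rightarrow> real) \<Rightarrow> nat \<Rightarrow> int \<Rightarrow> real" where
  "Rk \<epsilon> p \<psi> idx rep coll v k i = lin idx v k i + corr \<epsilon> p \<psi> idx rep coll v k i"

definition aHQC :: "real \<Rightarrow> nat \<Rightarrow> nat \<Rightarrow> (int \<Rightarrow> int \<Rightarrow> real) \<Rightarrow> (nat \<Rightarrow> int) \<Rightarrow> (nat \<Rightarrow> int)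
     \<Rightarrow> (nat \<Rightarrow> int) \<Rightarrow> (int \<Rightarrow> real) \<Rightarrow> (int \<Rightarrow> real) \<Rightarrow> real" where
  "aHQC \<epsilon> p K \<psi> idx rep coll u v = (\<Sum>k = 1..K. Hk \<epsilon> idx k *
      innerRep p (rep k) (\<lambda>i. \<psi> (coll k) i * Dd \<epsilon> (Rk \<epsilon> p \<psi> idx rep coll u k) i)
                         (Dd \<epsilon> (Rk \<epsilon> p \<psi> idx rep coll v k)))"

definition HQC_sol :: "nat \<Rightarrow> real \<Rightarrow> nat \<Rightarrow> nat \<Rightarrow> (int \<Rightarrow> int \<Rightarrow> real) \<Rightarrow> (nat \<Rightarrow> int)
     \<Rightarrow> (nat \<Rightarrow> int) \<Rightarrow> (nat \<Rightarrow> int) \<Rightarrow> (int \<Rightarrow> real) \<Rightarrow> (int \<Rightarrow> real) \<Rightarrow> bool" where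
  "HQC_sol N \<epsilon> p K \<psi> idx rep coll f u \<longleftrightarrow> UH_sharp N K idx u \<and>
     (\<forall>v. UH_sharp N K idx v \<longrightarrow> aHQC \<epsilon> p K \<psi> idx rep coll u v = innerX N f v)"

text \<open>Reconstruction u^{H,c}(X_i) = u^H(X_i) + w_k(X_i) for X_i in S_k (i in 1..N),
extended N-periodically.\<close>
definition recon :: "nat \<Rightarrow> real \<Rightarrow> nat \<Rightarrow> nat \<Rightarrow> (int \<Rightarrow> int \<Rightarrow> real) \<Rightarrow> (nat \<Rightarrow> int)
     \<Rightarrow> (nat \<Rightarrow> int) \<Rightarrow> (nat \<Rightarrow> int) \<Rightarrow> (int \<Rightarrow> real) \<Rightarrow> int \<Rightarrow> real" where
  "recon N \<epsilon> p K \<psi> idx rep coll u i =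
     (let i' = (i - 1) mod int N + 1 in
      u i' + (\<Sum>k = 1..K. if idx k \<le> i' \<and> i' < idx (k + 1)
                             then corr \<epsilon> p \<psi> idx rep coll u k i' else 0))"

definition uhat :: "real \<Rightarrow> (int \<Rightarrow> int \<Rightarrow> real) \<Rightarrow> (int \<Rightarrow> real) \<Rightarrow> int \<Rightarrow> real" where
  "uhat \<epsilon> \<chi> u i = u i + \<epsilon> * \<chi> i i * Dd \<epsilon> u i"

end

theory Submission
  imports Defs
begin

text \<open>In one dimension the cell problem is solved explicitly: the flux
  \<psi>(x,.) (1 + D_Y \<chi>(x,.)) is constant, equal to the harmonic mean of \<psi>(x,.). Hence the local
  corrector of an affine function on S_k is its slope times \<chi>(X_coll,.), and at X_i in S_k the
  reconstruction differs from the two-scale expansion by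
  \<epsilon> Du^H(X_i) (\<chi>(X_i, X_i/\<epsilon>) - \<chi>(X_coll, X_i/\<epsilon>)). The harmonic mean, and with it the cell
  solution, is Lipschitz in the slow variable, and |X_i - X_coll| \<le> H, so this error is at most
  \<epsilon> C H |Du^H(X_i)|. Coercivity of the HQC form gives |u^H|_{H^1} \<le> (C_\<psi> / c_\<psi>^2) |f|_{H^-1};
  the L2 estimate follows directly, the H1 estimate after a difference quotient eats the factor \<epsilon>.\<close>

section \<open>Periodic grid functions\<close>

lemma sum_telescope_int:
  fixes s :: "int \<Rightarrow> real"
  shows "(\<Sum>i = a..a + int n - 1. s (i + 1) - s i) = s (a + int n) - s a"
proof (induction n)
  case 0 then show ?case by simp
next
  case (Suc n)
  have "{a..a + int (Suc n) - 1} = insert (a + int n) {a..a + int n - 1}" by auto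
  then have "(\<Sum>i = a..a + int (Suc n) - 1. s (i + 1) - s i)
      = (s (a + int n + 1) - s (a + int n)) + (\<Sum>i = a..a + int n - 1. s (i + 1) - s i)"
    by simp
  also have "\<dots> = s (a + int n + 1) - s a" using Suc by simp
  finally show ?case by (simp add: add.assoc add.commute[of 1])
qed

lemma shift_invariant_imp_const:
  fixes G :: "int \<Rightarrow> 'a"
  assumes "\<And>j. G (j + 1) = G j"
  shows "G j = G 0"
proof (induction j rule: int_induct[where k = 0])
  case base then show ?case by simp
next
  case (step1 i) then show ?case using assms by simp
next
  case (step2 i) then show ?case using assms[of "i - 1"] by simp
qed

lemma per_add_mult:
  assumes "per n d"
  shows "d (x + int n * t) = d x"
proof -
  have "d (x + int n * (t + 1)) = d (x + int n * t)" for t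
  proof -
    have "x + int n * (t + 1) = (x + int n * t) + int n" by (simp add: algebra_simps)
    then show ?thesis using assms unfolding per_def by metis
  qed
  from shift_invariant_imp_const[of "\<lambda>t. d (x + int n * t)", OF this] show ?thesis by simp
qed

lemma per_reduce:
  assumes "per n d" "0 < n"
  shows "d j = d (r + (j - r) mod int n)" and "r + (j - r) mod int n \<in> {r..r + int n - 1}"
proof -
  have "j = (r + (j - r) mod int n) + int n * ((j - r) div int n)"
    using div_mult_mod_eq[of "j - r" "int n"] by (simp add: algebra_simps)
  then show "d j = d (r + (j - r) mod int n)"
    using per_add_mult[OF assms(1)] by metis
  show "r + (j - r) mod int n \<in> {r..r + int n - 1}"
    using assms(2) pos_mod_bound[of "int n" "j - r"] by simp
qed

lemma per_window_forall:
  assumes "per n F" "0 < n" "\<And>j. j \<in> {r..r + int n - 1} \<Longrightarrow> P (F j)"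
  shows "P (F j)"
  using per_reduce[OF assms(1,2), where j = j and r = r] assms(3) by metis

lemma per_Dd: "per N u \<Longrightarrow> per N (Dd \<epsilon> u)"
  unfolding per_def Dd_def by (metis add.commute add.left_commute)

lemma sum_per_shift:
  fixes F :: "int \<Rightarrow> real"
  assumes "per N F"
  shows "(\<Sum>i = 1..int N. F (i + 1)) = (\<Sum>i = 1..int N. F i)"
proof -
  have "(\<Sum>i = 1..int N. F (i + 1) - F i) = F (1 + int N) - F 1" using sum_telescope_int[of F 1 N] by simp
  also have "\<dots> = 0" using assms unfolding per_def by (metis add.commute diff_self)
  finally show ?thesis by (simp add: sum_subtractf)
qed

lemma lipschitz_of_steps:
  fixes e :: "int \<Rightarrow> real"
  assumes "\<And>j. \<bar>e (j + 1) - e j\<bar> \<le> \<beta>"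
  shows "\<bar>e x - e y\<bar> \<le> \<beta> * \<bar>real_of_int (x - y)\<bar>"
proof -
  have up: "\<bar>e (y + int n) - e y\<bar> \<le> \<beta> * real n" for n y
  proof (induction n)
    case 0 then show ?case by simp
  next
    case (Suc n)
    have "\<bar>e (y + int n + 1) - e y\<bar> \<le> \<bar>e (y + int n + 1) - e (y + int n)\<bar> + \<bar>e (y + int n) - e y\<bar>"
      by linarith
    also have "\<dots> \<le> \<beta> + \<beta> * real n" using assms Suc by (meson add_mono)
    finally show ?case by (simp add: algebra_simps)
  qed
  show ?thesis
  proof (cases "y \<le> x")
    case True
    then obtain n where "x = y + int n" using zle_iff_zadd by blast
    then show ?thesis using up[of y n] by simp
  next
    case False
    then obtain n where "y = x + int n" using zle_iff_zadd by (meson nle_le)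
    then show ?thesis using up[of x n] by (simp add: abs_minus_commute)
  qed
qed

text \<open>Since the mean vanishes, e j is the average of the differences e j - e l over a period.\<close>
lemma abs_le_of_steps_mean_zero:
  fixes e :: "int \<Rightarrow> real"
  assumes "per p e" "0 < p" "(\<Sum>j = 1..int p. e j) = 0" "\<And>j. \<bar>e (j + 1) - e j\<bar> \<le> \<beta>"
  shows "\<bar>e j\<bar> \<le> real p * \<beta>"
proof (rule per_window_forall[OF assms(1,2), where P = "\<lambda>x. \<bar>x\<bar> \<le> real p * \<beta>" and r = 1])
  fix j0 assume j0: "j0 \<in> {1..1 + int p - 1}"
  have each: "\<bar>e j0 - e l\<bar> \<le> real p * \<beta>" if "l \<in> {1..int p}" for l
  proof -
    have "\<bar>e j0 - e l\<bar> \<le> \<beta> * \<bar>real_of_int (j0 - l)\<bar>" using lipschitz_of_steps assms(4) by blast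
    moreover have "\<bar>real_of_int (j0 - l)\<bar> \<le> real p" using that j0 by auto
    moreover have "\<beta> \<ge> 0" using assms(4)[of 0] by simp
    ultimately show ?thesis by (smt (verit) mult.commute mult_left_mono)
  qed
  have "real p * \<bar>e j0\<bar> = \<bar>\<Sum>l = 1..int p. e j0 - e l\<bar>"
    using assms(3) by (simp add: sum_subtractf abs_mult)
  also have "\<dots> \<le> (\<Sum>l = 1..int p. \<bar>e j0 - e l\<bar>)" by (rule sum_abs)
  also have "\<dots> \<le> (\<Sum>l = 1..int p. real p * \<beta>)" by (rule sum_mono) (use each in auto)
  also have "\<dots> = real p * (real p * \<beta>)" by simp
  finally show "\<bar>e j0\<bar> \<le> real p * \<beta>" using assms(2) by simp
qed

section \<open>The cell problem\<close>

definition harm_mean :: "nat \<Rightarrow> (int \<Rightarrow> real) \<Rightarrow> real" where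
  "harm_mean p a = real p / (\<Sum>j = 1..int p. 1 / a j)"

lemma sum_inverse_bounds:
  fixes a :: "int \<Rightarrow> real"
  assumes "0 < c" "\<And>j. c \<le> a j \<and> a j \<le> C"
  shows "real p / C \<le> (\<Sum>j = 1..int p. 1 / a j)" and "(\<Sum>j = 1..int p. 1 / a j) \<le> real p / c"
proof -
  have pos: "0 < a j" "0 < C" for j using assms(1) assms(2)[of j] by linarith+
  have "(\<Sum>j = 1..int p. 1 / C) \<le> (\<Sum>j = 1..int p. 1 / a j)"
    by (rule sum_mono) (use assms pos in \<open>auto intro: frac_le\<close>)
  then show "real p / C \<le> (\<Sum>j = 1..int p. 1 / a j)" by simp
  have "(\<Sum>j = 1..int p. 1 / a j) \<le> (\<Sum>j = 1..int p. 1 / c)"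
    by (rule sum_mono) (use assms pos in \<open>auto intro: frac_le\<close>)
  then show "(\<Sum>j = 1..int p. 1 / a j) \<le> real p / c" by simp
qed

lemma harm_mean_bounds:
  fixes a :: "int \<Rightarrow> real"
  assumes "0 < c" "0 < p" "\<And>j. c \<le> a j \<and> a j \<le> C"
  shows "c \<le> harm_mean p a" and "harm_mean p a \<le> C"
proof -
  define S where "S = (\<Sum>j = 1..int p. 1 / a j)"
  have S: "real p / C \<le> S" "S \<le> real p / c"
    unfolding S_def using sum_inverse_bounds[of c a C p, OF assms(1,3)] by auto
  have C: "0 < C" using assms(1) assms(3)[of 0] by linarith
  then have Sp: "0 < S" using S(1) assms(2) by (smt (verit) divide_pos_pos of_nat_0_less_iff)
  have "c * S \<le> real p" using S(2) assms(1) by (simp add: pos_le_divide_eq mult.commute)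
  then show "c \<le> harm_mean p a" unfolding harm_mean_def S_def[symmetric] using Sp by (simp add: pos_le_divide_eq)
  have "real p \<le> C * S" using S(1) C by (simp add: pos_divide_le_eq mult.commute)
  then show "harm_mean p a \<le> C" unfolding harm_mean_def S_def[symmetric] using Sp by (simp add: pos_divide_le_eq)
qed

lemma inverse_diff_le:
  fixes x y c \<delta> :: real
  assumes "0 < c" "c \<le> x" "c \<le> y" "\<bar>x - y\<bar> \<le> \<delta>"
  shows "\<bar>1 / x - 1 / y\<bar> \<le> \<delta> / c\<^sup>2"
proof -
  have "\<bar>1 / x - 1 / y\<bar> = \<bar>x - y\<bar> / (x * y)" using assms by (simp add: field_simps abs_minus_commute)
  also have "\<dots> \<le> \<delta> / (x * y)" using assms by (simp add: divide_right_mono)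
  also have "\<dots> \<le> \<delta> / c\<^sup>2"
    using assms by (intro divide_left_mono) (auto simp: power2_eq_square mult_mono)
  finally show ?thesis .
qed

lemma harm_mean_diff_le:
  fixes a a' :: "int \<Rightarrow> real"
  assumes c: "0 < c" and p: "0 < p"
    and a: "\<And>j. c \<le> a j \<and> a j \<le> C" and a': "\<And>j. c \<le> a' j \<and> a' j \<le> C"
    and d: "\<And>j. \<bar>a j - a' j\<bar> \<le> \<delta>"
  shows "\<bar>harm_mean p a - harm_mean p a'\<bar> \<le> C\<^sup>2 / c\<^sup>2 * \<delta>"
proof -
  define S where "S = (\<Sum>j = 1..int p. 1 / a j)"
  define S' where "S' = (\<Sum>j = 1..int p. 1 / a' j)"
  have lo: "real p / C \<le> S" "real p / C \<le> S'"
    unfolding S_def S'_def using sum_inverse_bounds(1) c a a' by blast+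
  have pC: "0 < real p / C" using a[of 0] c p by simp
  have dS: "\<bar>S - S'\<bar> \<le> real p * (\<delta> / c\<^sup>2)"
  proof -
    have "\<bar>S - S'\<bar> \<le> (\<Sum>j = 1..int p. \<bar>1 / a j - 1 / a' j\<bar>)"
      unfolding S_def S'_def sum_subtractf[symmetric] by (rule sum_abs)
    also have "\<dots> \<le> (\<Sum>j = 1..int p. \<delta> / c\<^sup>2)"
      by (rule sum_mono) (use inverse_diff_le c a a' d in blast)
    finally show ?thesis by simp
  qed
  have Sp: "0 < S" "0 < S'" using lo pC by linarith+
  have "harm_mean p a - harm_mean p a' = real p * (S' - S) / (S * S')"
    unfolding harm_mean_def S_def[symmetric] S'_def[symmetric] using Sp by (simp add: field_simps)
  then have "\<bar>harm_mean p a - harm_mean p a'\<bar> = real p * \<bar>S - S'\<bar> / (S * S')"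
    using Sp by (simp add: abs_mult abs_minus_commute)
  also have "\<dots> \<le> real p * (real p * (\<delta> / c\<^sup>2)) / ((real p / C) * (real p / C))"
  proof (rule frac_le)
    show "0 \<le> real p * (real p * (\<delta> / c\<^sup>2))" using d[of 0] by simp
    show "real p * \<bar>S - S'\<bar> \<le> real p * (real p * (\<delta> / c\<^sup>2))" using mult_left_mono[OF dS, of "real p"] by simp
    show "0 < real p / C * (real p / C)" using pC by (intro mult_pos_pos)
    show "real p / C * (real p / C) \<le> S * S'" using lo pC by (intro mult_mono) auto
  qed
  also have "\<dots> = C\<^sup>2 / c\<^sup>2 * \<delta>" using p pC by (simp add: field_simps power2_eq_square)
  finally show ?thesis .
qed

lemma harm_mean_ratio_diff_le:
  fixes a a' :: "int \<Rightarrow> real"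
  assumes c: "0 < c" and p: "0 < p"
    and a: "\<And>j. c \<le> a j \<and> a j \<le> C" and a': "\<And>j. c \<le> a' j \<and> a' j \<le> C"
    and d: "\<And>j. \<bar>a j - a' j\<bar> \<le> \<delta>"
  shows "\<bar>harm_mean p a / a j - harm_mean p a' / a' j\<bar> \<le> (C\<^sup>2 / c ^ 3 + C / c\<^sup>2) * \<delta>"
proof -
  let ?q = "harm_mean p a" and ?q' = "harm_mean p a'"
  have pos: "0 < a j" "0 < a' j" using a[of j] a'[of j] c by linarith+
  have q': "0 \<le> ?q'" "?q' \<le> C" using harm_mean_bounds[of c p a' C, OF c p a'] c by linarith+
  have "\<bar>?q / a j - ?q' / a' j\<bar> \<le> \<bar>?q - ?q'\<bar> / a j + \<bar>?q'\<bar> * \<bar>1 / a j - 1 / a' j\<bar>"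
  proof -
    have "?q / a j - ?q' / a' j = (?q - ?q') / a j + ?q' * (1 / a j - 1 / a' j)"
      using pos by (simp add: field_simps)
    then have "\<bar>?q / a j - ?q' / a' j\<bar> \<le> \<bar>(?q - ?q') / a j\<bar> + \<bar>?q' * (1 / a j - 1 / a' j)\<bar>"
      by (metis abs_triangle_ineq)
    then show ?thesis using pos by (simp add: abs_mult)
  qed
  also have "\<dots> \<le> (C\<^sup>2 / c\<^sup>2 * \<delta>) / c + C * (\<delta> / c\<^sup>2)"
  proof (rule add_mono)
    show "\<bar>?q - ?q'\<bar> / a j \<le> C\<^sup>2 / c\<^sup>2 * \<delta> / c"
      using harm_mean_diff_le[OF c p a a' d] a[of j] c d[of j] by (intro frac_le) auto
    show "\<bar>?q'\<bar> * \<bar>1 / a j - 1 / a' j\<bar> \<le> C * (\<delta> / c\<^sup>2)"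
      using q' inverse_diff_le[OF c _ _ d] a a' by (intro mult_mono) auto
  qed
  also have "\<dots> = (C\<^sup>2 / c ^ 3 + C / c\<^sup>2) * \<delta>" using c by (simp add: field_simps power2_eq_square power3_eq_cube)
  finally show ?thesis .
qed

lemma cell_sol_flux_const:
  assumes "cell_sol N p \<psi> \<chi>"
  shows "\<psi> i j * (1 + DY \<chi> i j) = \<psi> i 0 * (1 + DY \<chi> i 0)"
proof -
  have "\<psi> i (j + 1) * (1 + DY \<chi> i (j + 1)) = \<psi> i j * (1 + DY \<chi> i j)" for j
  proof -
    have "- DY (\<lambda>i' j'. \<psi> i' j' * DY \<chi> i' j') i j = DY \<psi> i j"
      using assms unfolding cell_sol_def by blast
    then show ?thesis unfolding DY_def by (simp add: algebra_simps)
  qed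
  from shift_invariant_imp_const[of "\<lambda>j. \<psi> i j * (1 + DY \<chi> i j)", OF this] show ?thesis .
qed

lemma cell_sol_flux_eq_harm_mean:
  assumes cs: "cell_sol N p \<psi> \<chi>" and p: "0 < p" and pos: "\<And>j. 0 < \<psi> i j"
  shows "\<psi> i j * (1 + DY \<chi> i j) = harm_mean p (\<psi> i)"
proof -
  define q where "q = \<psi> i 0 * (1 + DY \<chi> i 0)"
  have dy: "DY \<chi> i j = q / \<psi> i j - 1" for j
    using cell_sol_flux_const[OF cs, of i j] pos[of j] unfolding q_def by (simp add: field_simps)
  have "(\<Sum>j = 1..int p. DY \<chi> i j) = \<chi> i (1 + int p) - \<chi> i 1"
    using sum_telescope_int[of "\<chi> i" 1 p] unfolding DY_def by simp
  also have "\<dots> = 0" using cs unfolding cell_sol_def two_scale_def by (metis add.commute diff_self)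
  finally have "q * (\<Sum>j = 1..int p. 1 / \<psi> i j) = real p"
    unfolding dy by (simp add: sum_subtractf sum_distrib_left)
  moreover have "0 < (\<Sum>j = 1..int p. 1 / \<psi> i j)" using p pos by (intro sum_pos) auto
  ultimately have "q = harm_mean p (\<psi> i)" unfolding harm_mean_def by (simp add: field_simps)
  then show ?thesis using cell_sol_flux_const[OF cs, of i j] unfolding q_def by simp
qed

lemma DY_cell_sol:
  assumes "cell_sol N p \<psi> \<chi>" "0 < p" "\<And>j. 0 < \<psi> i j"
  shows "DY \<chi> i j = harm_mean p (\<psi> i) / \<psi> i j - 1"
  using cell_sol_flux_eq_harm_mean[OF assms, of j] assms(3)[of j] by (simp add: field_simps)

text \<open>The increments of the cell solution are the ratios of harm_mean_ratio_diff_le, and it has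
  mean zero.\<close>
lemma cell_sol_diff_le:
  assumes cs: "cell_sol N p \<psi> \<chi>" and p: "0 < p" and c: "0 < c"
    and bnd: "\<forall>i j. c \<le> \<psi> i j \<and> \<psi> i j \<le> C"
    and d: "\<And>j. \<bar>\<psi> i j - \<psi> i' j\<bar> \<le> \<delta>"
  shows "\<bar>\<chi> i j - \<chi> i' j\<bar> \<le> real p * ((C\<^sup>2 / c ^ 3 + C / c\<^sup>2) * \<delta>)"
proof -
  define e where "e = (\<lambda>j. \<chi> i j - \<chi> i' j)"
  have ts: "two_scale N p \<chi>" and mz: "\<And>i. (\<Sum>j = 1..int p. \<chi> i j) = 0"
    using cs p unfolding cell_sol_def by auto
  have pe: "per p e" using ts unfolding per_def e_def two_scale_def by simp
  have se: "(\<Sum>j = 1..int p. e j) = 0" unfolding e_def by (simp add: sum_subtractf mz)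
  have pos: "\<And>i j. 0 < \<psi> i j" using bnd c by (meson less_le_trans)
  have "\<bar>e (j + 1) - e j\<bar> \<le> (C\<^sup>2 / c ^ 3 + C / c\<^sup>2) * \<delta>" for j
  proof -
    have "e (j + 1) - e j = harm_mean p (\<psi> i) / \<psi> i j - harm_mean p (\<psi> i') / \<psi> i' j"
      unfolding e_def using DY_cell_sol[OF cs p pos, of i j] DY_cell_sol[OF cs p pos, of i' j]
      unfolding DY_def by simp
    then show ?thesis using harm_mean_ratio_diff_le[of c p "\<psi> i" C "\<psi> i'" \<delta> j] c p bnd d by simp
  qed
  from abs_le_of_steps_mean_zero[OF pe p se this] show ?thesis unfolding e_def .
qed

lemma abs_le_Linf:
  assumes "i \<in> {1..int N}" "j \<in> {1..int p}"
  shows "\<bar>g i j\<bar> \<le> Linf N p g"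
proof -
  have "{\<bar>g i j\<bar> | i j. i \<in> {1..int N} \<and> j \<in> {1..int p}} = (\<lambda>(i, j). \<bar>g i j\<bar>) ` ({1..int N} \<times> {1..int p})"
    by fastforce
  then have "finite {\<bar>g i j\<bar> | i j. i \<in> {1..int N} \<and> j \<in> {1..int p}}" by simp
  then show ?thesis unfolding Linf_def by (rule Max_ge) (use assms in blast)
qed

lemma two_scale_lipschitz_X:
  assumes ts: "two_scale N p g" and N: "0 < N" and p: "0 < p" and eps: "0 < \<epsilon>"
    and L: "Linf N p (DX \<epsilon> g) \<le> L"
  shows "\<bar>g x j - g y j\<bar> \<le> L * \<epsilon> * \<bar>real_of_int (x - y)\<bar>"
proof -
  have step: "\<bar>g (l + 1) j - g l j\<bar> \<le> L * \<epsilon>" if "l \<in> {1..int N}" "j \<in> {1..int p}" for l j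
  proof -
    have "\<bar>DX \<epsilon> g l j\<bar> \<le> L" using abs_le_Linf[OF that, of "DX \<epsilon> g"] L by linarith
    then show ?thesis using eps unfolding DX_def by (simp add: abs_div pos_divide_le_eq mult.commute)
  qed
  have "per p (\<lambda>j. g l j)" "per p (\<lambda>j. g (l + 1) j)" for l
    using ts unfolding two_scale_def per_def by auto
  then have "per p (\<lambda>j. g (l + 1) j - g l j)" for l unfolding per_def by simp
  then have "\<bar>g (l + 1) j - g l j\<bar> \<le> L * \<epsilon>" if "l \<in> {1..int N}" for l j
    using per_window_forall[OF _ p, where r = 1 and P = "\<lambda>x. \<bar>x\<bar> \<le> L * \<epsilon>"
        and F = "\<lambda>j. g (l + 1) j - g l j"] step[OF that] by simp
  moreover have "per N (\<lambda>l. g (l + 1) j - g l j)"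
    using ts unfolding two_scale_def per_def by (metis add.commute add.left_commute)
  ultimately have "\<bar>g (l + 1) j - g l j\<bar> \<le> L * \<epsilon>" for l
    using per_window_forall[OF _ N, where r = 1 and P = "\<lambda>x. \<bar>x\<bar> \<le> L * \<epsilon>"
        and F = "\<lambda>l. g (l + 1) j - g l j"] by simp
  then show ?thesis by (rule lipschitz_of_steps)
qed

section \<open>Local correctors\<close>

lemma innerRep_const_flux:
  assumes flux: "\<And>i. a i * Dd \<epsilon> v i = K" and s: "per p s"
  shows "innerRep p r (\<lambda>i. a i * Dd \<epsilon> v i) (Dd \<epsilon> s) = 0"
proof -
  have "(\<Sum>i = r..r + int p - 1. a i * Dd \<epsilon> v i * Dd \<epsilon> s i)
      = K / \<epsilon> * (\<Sum>i = r..r + int p - 1. s (i + 1) - s i)"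
    unfolding flux by (simp add: Dd_def sum_distrib_left)
  also have "\<dots> = 0" using s unfolding sum_telescope_int per_def by simp
  finally show ?thesis unfolding innerRep_def by simp
qed

lemma Up_sharp_eq_zero_of_energy_zero:
  fixes a d :: "int \<Rightarrow> real"
  assumes d: "Up_sharp p d" and p: "0 < p" and eps: "0 < \<epsilon>" and a: "\<And>i. 0 < a i"
    and E: "innerRep p r (\<lambda>i. a i * Dd \<epsilon> d i) (Dd \<epsilon> d) = 0"
  shows "d = (\<lambda>_. 0)"
proof -
  have "(\<Sum>i = r..r + int p - 1. a i * (Dd \<epsilon> d i)\<^sup>2) = 0"
    using E p unfolding innerRep_def by (simp add: power2_eq_square mult.assoc)
  then have "\<forall>i \<in> {r..r + int p - 1}. a i * (Dd \<epsilon> d i)\<^sup>2 = 0"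
    by (subst sum_nonneg_eq_0_iff[symmetric]) (auto intro!: mult_nonneg_nonneg simp: a less_imp_le)
  then have "Dd \<epsilon> d i = 0" if "i \<in> {r..r + int p - 1}" for i
    using that a[of i] by fastforce
  moreover have "per p (Dd \<epsilon> d)" using d per_Dd unfolding Up_sharp_def by blast
  ultimately have "Dd \<epsilon> d i = 0" for i
    using per_window_forall[OF _ p, where P = "\<lambda>x. x = 0" and r = r and F = "Dd \<epsilon> d"] by simp
  then have "d (i + 1) = d i" for i using eps unfolding Dd_def by simp
  then have const: "d i = d 0" for i by (rule shift_invariant_imp_const)
  have "(\<Sum>i = 1..int p. d i) = real p * d 0" by (subst const) simp
  then have "real p * d 0 = 0" using d unfolding Up_sharp_def by simp
  then show ?thesis using p const by (simp add: fun_eq_iff)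
qed

lemma the_cell_corrector:
  fixes L u a :: "int \<Rightarrow> real"
  assumes a: "\<And>i. 0 < a i" and p: "0 < p" and eps: "0 < \<epsilon>"
    and flux: "\<And>i. a i * Dd \<epsilon> (\<lambda>i'. L i' + u i') i = K" and u: "Up_sharp p u"
  shows "(THE w. Up_sharp p w \<and> (\<forall>s. Up_sharp p s \<longrightarrow>
      innerRep p r (\<lambda>i. a i * Dd \<epsilon> (\<lambda>i'. L i' + w i') i) (Dd \<epsilon> s) = 0)) = u"
proof (rule the_equality)
  show "Up_sharp p u \<and> (\<forall>s. Up_sharp p s \<longrightarrow>
      innerRep p r (\<lambda>i. a i * Dd \<epsilon> (\<lambda>i'. L i' + u i') i) (Dd \<epsilon> s) = 0)"
    using u innerRep_const_flux[OF flux] unfolding Up_sharp_def by blast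
next
  fix w assume w: "Up_sharp p w \<and> (\<forall>s. Up_sharp p s \<longrightarrow>
      innerRep p r (\<lambda>i. a i * Dd \<epsilon> (\<lambda>i'. L i' + w i') i) (Dd \<epsilon> s) = 0)"
  define d where "d = (\<lambda>i. w i - u i)"
  have ud: "Up_sharp p d" using w u unfolding Up_sharp_def per_def d_def by (simp add: sum_subtractf)
  have Dd_d: "Dd \<epsilon> d i = Dd \<epsilon> (\<lambda>i'. L i' + w i') i - Dd \<epsilon> (\<lambda>i'. L i' + u i') i" for i
    unfolding Dd_def d_def by (simp add: diff_divide_distrib[symmetric])
  have "innerRep p r (\<lambda>i. a i * Dd \<epsilon> d i) (Dd \<epsilon> d)
      = innerRep p r (\<lambda>i. a i * Dd \<epsilon> (\<lambda>i'. L i' + w i') i) (Dd \<epsilon> d)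
        - innerRep p r (\<lambda>i. a i * Dd \<epsilon> (\<lambda>i'. L i' + u i') i) (Dd \<epsilon> d)"
    unfolding innerRep_def diff_divide_distrib[symmetric] sum_subtractf[symmetric]
    by (simp add: Dd_d algebra_simps)
  also have "\<dots> = 0" using w ud innerRep_const_flux[OF flux] unfolding Up_sharp_def by simp
  finally have "d = (\<lambda>_. 0)" by (rule Up_sharp_eq_zero_of_energy_zero[OF ud p eps a])
  then show "w = u" unfolding d_def by (simp add: fun_eq_iff)
qed

definition slope :: "(nat \<Rightarrow> int) \<Rightarrow> (int \<Rightarrow> real) \<Rightarrow> nat \<Rightarrow> real" where
  "slope idx v k = (v (idx (k + 1)) - v (idx k)) / real_of_int (idx (k + 1) - idx k)"

lemma lin_step: "lin idx v k (i + 1) - lin idx v k i = slope idx v k"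
proof -
  have lin: "lin idx v k i = v (idx k) + slope idx v k * real_of_int (i - idx k)" for i
    unfolding lin_def slope_def by simp
  show ?thesis unfolding lin by (simp add: algebra_simps)
qed

lemma Dd_lin_plus_cell_sol:
  "Dd \<epsilon> (\<lambda>i'. lin idx v k i' + slope idx v k * \<chi> x i') i = slope idx v k / \<epsilon> * (1 + DY \<chi> x i)"
proof -
  have "lin idx v k (i + 1) + slope idx v k * \<chi> x (i + 1) - (lin idx v k i + slope idx v k * \<chi> x i)
      = slope idx v k * (1 + DY \<chi> x i)"
    using lin_step[of idx v k i] unfolding DY_def by (simp add: algebra_simps)
  then show ?thesis unfolding Dd_def by simp
qed

lemma cell_sol_flux_Dd:
  assumes cs: "cell_sol N p \<psi> \<chi>" and p: "0 < p" and pos: "\<forall>i j. 0 < \<psi> i j"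
  shows "\<psi> x i * Dd \<epsilon> (\<lambda>i'. lin idx v k i' + slope idx v k * \<chi> x i') i
    = slope idx v k / \<epsilon> * harm_mean p (\<psi> x)"
  unfolding Dd_lin_plus_cell_sol cell_sol_flux_eq_harm_mean[OF cs p, of x i, symmetric, OF pos[rule_format]]
  by (simp only: mult_ac)

text \<open>Its flux being constant, the scaled cell solution satisfies the local Galerkin condition,
  which determines the corrector uniquely.\<close>
lemma corr_eq_slope_cell_sol:
  assumes cs: "cell_sol N p \<psi> \<chi>" and p: "0 < p" and eps: "0 < \<epsilon>" and pos: "\<forall>i j. 0 < \<psi> i j"
  shows "corr \<epsilon> p \<psi> idx rep coll v k = (\<lambda>i. slope idx v k * \<chi> (coll k) i)"
proof -
  have "Up_sharp p (\<lambda>i. slope idx v k * \<chi> (coll k) i)"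
    using cs p unfolding cell_sol_def two_scale_def Up_sharp_def per_def
    by (simp add: sum_distrib_left[symmetric])
  then show ?thesis
    unfolding corr_def using the_cell_corrector[where a = "\<psi> (coll k)" and L = "lin idx v k"
      and u = "\<lambda>i. slope idx v k * \<chi> (coll k) i" and r = "rep k", OF _ p eps
      cell_sol_flux_Dd[OF cs p pos]] pos by blast
qed

lemma flux_Rk:
  assumes cs: "cell_sol N p \<psi> \<chi>" and p: "0 < p" and eps: "0 < \<epsilon>" and pos: "\<forall>i j. 0 < \<psi> i j"
  shows "\<psi> (coll k) i * Dd \<epsilon> (Rk \<epsilon> p \<psi> idx rep coll v k) i
    = slope idx v k / \<epsilon> * harm_mean p (\<psi> (coll k))"
  using cell_sol_flux_Dd[OF cs p pos]
  unfolding Rk_def[abs_def] corr_eq_slope_cell_sol[OF cs p eps pos] .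

section \<open>The coarse mesh\<close>

lemma mesh_mono:
  assumes m: "mesh N K idx" and k: "1 \<le> k" "k \<le> k'" "k' \<le> K + 1"
  shows "idx k \<le> idx k'"
proof -
  have "k + d \<le> K + 1 \<Longrightarrow> idx k \<le> idx (k + d)" for d
  proof (induction d)
    case 0 then show ?case by simp
  next
    case (Suc d)
    have "idx (k + d) < idx (k + d + 1)" using m Suc.prems k(1) unfolding mesh_def by auto
    then show ?case using Suc by simp
  qed
  from this[of "k' - k"] show ?thesis using k by simp
qed

lemma mesh_segment_exists:
  assumes m: "mesh N K idx" and i: "1 \<le> i" "i \<le> int N"
  obtains k where "k \<in> {1..K}" "idx k \<le> i" "i < idx (k + 1)"
proof -
  define A where "A = {k \<in> {1..K}. idx k \<le> i}"
  have K: "K \<ge> 1" "idx 1 = 1" "idx (K + 1) = int N + 1" using m unfolding mesh_def by auto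
  have "1 \<in> A" unfolding A_def using K i by auto
  moreover have fin: "finite A" unfolding A_def by simp
  ultimately have kA: "Max A \<in> A" by (intro Max_in) auto
  have "i < idx (Max A + 1)"
  proof (cases "Max A = K")
    case True then show ?thesis using K i by simp
  next
    case False
    then have "Max A + 1 \<in> {1..K}" using kA unfolding A_def by auto
    moreover have "Max A + 1 \<notin> A" using Max_ge[OF fin, of "Max A + 1"] by auto
    ultimately show ?thesis unfolding A_def by auto
  qed
  then show ?thesis using that kA unfolding A_def by auto
qed

lemma mesh_segment_unique:
  assumes m: "mesh N K idx"
    and k: "k \<in> {1..K}" "idx k \<le> i" "i < idx (k + 1)"
    and k': "k' \<in> {1..K}" "idx k' \<le> i" "i < idx (k' + 1)"
  shows "k = k'"
proof (rule ccontr)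
  assume "k \<noteq> k'"
  then consider "k + 1 \<le> k'" | "k' + 1 \<le> k" by linarith
  then show False
  proof cases
    case 1 then show False using mesh_mono[OF m, of "k + 1" k'] k k' by auto
  next
    case 2 then show False using mesh_mono[OF m, of "k' + 1" k] k k' by auto
  qed
qed

lemma sum_mesh_segments:
  fixes F :: "int \<Rightarrow> real"
  assumes m: "mesh N K idx"
  shows "(\<Sum>k = 1..K. \<Sum>i = idx k..idx (k + 1) - 1. F i) = (\<Sum>i = 1..int N. F i)"
proof -
  have K: "idx 1 = 1" "idx (K + 1) = int N + 1" using m unfolding mesh_def by auto
  have "n \<le> K \<Longrightarrow> (\<Sum>k = 1..n. \<Sum>i = idx k..idx (k + 1) - 1. F i) = (\<Sum>i = 1..idx (n + 1) - 1. F i)" for n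
  proof (induction n)
    case 0 then show ?case using K by simp
  next
    case (Suc n)
    have "1 \<le> idx (n + 1)" "idx (n + 1) \<le> idx (n + 2)"
      using mesh_mono[OF m, of 1 "n + 1"] mesh_mono[OF m, of "n + 1" "n + 2"] K Suc.prems by auto
    then have "{1..idx (n + 2) - 1} = {1..idx (n + 1) - 1} \<union> {idx (n + 1)..idx (n + 2) - 1}" by auto
    then have "(\<Sum>i = 1..idx (n + 2) - 1. F i)
        = (\<Sum>i = 1..idx (n + 1) - 1. F i) + (\<Sum>i = idx (n + 1)..idx (n + 2) - 1. F i)"
      by (simp add: sum.union_disjoint)
    then show ?case using Suc by (simp add: numeral_2_eq_2)
  qed
  from this[of K] show ?thesis using K by simp
qed

lemma Hk_le_Hmax: "k \<in> {1..K} \<Longrightarrow> Hk \<epsilon> idx k \<le> Hmax \<epsilon> K idx"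
  unfolding Hmax_def by (rule Max_ge) auto

lemma Hmax_nonneg:
  assumes "mesh N K idx" "0 < \<epsilon>"
  shows "0 \<le> Hmax \<epsilon> K idx"
proof -
  have "1 \<in> {1..K}" "\<forall>k\<in>{1..K}. idx k < idx (k + 1)" using assms(1) unfolding mesh_def by auto
  then have "idx 1 < idx (1 + 1)" by blast
  then have "0 \<le> Hk \<epsilon> idx 1" using assms(2) unfolding Hk_def by simp
  also have "\<dots> \<le> Hmax \<epsilon> K idx" using assms Hk_le_Hmax unfolding mesh_def by auto
  finally show ?thesis .
qed

lemma UH_per_step:
  assumes u: "UH_per N K idx u" and m: "mesh N K idx"
    and k: "k \<in> {1..K}" and i: "idx k \<le> i" "i < idx (k + 1)"
  shows "u (i + 1) - u i = slope idx u k"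
proof -
  obtain a b where ab: "\<And>i. idx k \<le> i \<and> i \<le> idx (k + 1) \<Longrightarrow> u i = a + b * real_of_int i"
    using u k unfolding UH_per_def by blast
  have lt: "idx k < idx (k + 1)" using m k unfolding mesh_def by auto
  have "u (idx (k + 1)) - u (idx k) = b * real_of_int (idx (k + 1) - idx k)"
    using ab[of "idx k"] ab[of "idx (k + 1)"] lt by (simp add: algebra_simps)
  then have "slope idx u k = b" unfolding slope_def using lt by simp
  moreover have "u (i + 1) - u i = b" using ab[of i] ab[of "i + 1"] i by (simp add: algebra_simps)
  ultimately show ?thesis by simp
qed

lemma recon_on_segment:
  assumes m: "mesh N K idx" and k: "k \<in> {1..K}" "idx k \<le> i" "i < idx (k + 1)"
  shows "recon N \<epsilon> p K \<psi> idx rep coll u i = u i + corr \<epsilon> p \<psi> idx rep coll u k i"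
proof -
  have K: "idx 1 = 1" "idx (K + 1) = int N + 1" using m unfolding mesh_def by auto
  have "1 \<le> i" using mesh_mono[OF m, of 1 k] k K by auto
  moreover have "i \<le> int N" using mesh_mono[OF m, of "k + 1" "K + 1"] k K by auto
  ultimately have red: "(i - 1) mod int N + 1 = i" by simp
  have seg: "(idx k' \<le> i \<and> i < idx (k' + 1)) = (k' = k)" if "k' \<in> {1..K}" for k'
    using mesh_segment_unique[OF m k, of k'] that k by blast
  have "(\<Sum>k' = 1..K. if idx k' \<le> i \<and> i < idx (k' + 1) then corr \<epsilon> p \<psi> idx rep coll u k' i else 0)
      = (\<Sum>k' = 1..K. if k' = k then corr \<epsilon> p \<psi> idx rep coll u k' i else 0)"
    by (rule sum.cong[OF refl]) (simp only: seg)
  also have "\<dots> = corr \<epsilon> p \<psi> idx rep coll u k i" using k(1) by simp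
  finally show ?thesis unfolding recon_def Let_def red by simp
qed

section \<open>Discrete norms\<close>

lemma L2n_nonneg: "0 \<le> L2n N g"
  unfolding L2n_def innerX_def by (simp add: sum_nonneg)

lemma L2n_sq: "(L2n N g)\<^sup>2 = (\<Sum>i = 1..int N. (g i)\<^sup>2) / real N"
  unfolding L2n_def innerX_def by (simp add: sum_nonneg power2_eq_square)

lemma abs_le_sqrt_L2n:
  assumes "0 < N" "j \<in> {1..int N}"
  shows "\<bar>g j\<bar> \<le> sqrt (real N) * L2n N g"
proof -
  have "(g j)\<^sup>2 \<le> (\<Sum>i = 1..int N. (g i)\<^sup>2)" by (rule member_le_sum) (use assms in auto)
  also have "\<dots> = real N * (L2n N g)\<^sup>2" unfolding L2n_sq using assms by simp
  finally have "sqrt ((g j)\<^sup>2) \<le> sqrt (real N * (L2n N g)\<^sup>2)" by (rule real_sqrt_le_mono)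
  then show ?thesis using L2n_nonneg[of N g] by (simp add: real_sqrt_mult)
qed

text \<open>A crude discrete Sobolev inequality; it only serves to show that the supremum defining
  Hm1 is finite.\<close>
lemma abs_le_H1s_mean_zero:
  assumes N: "0 < N" and eps: "0 < \<epsilon>" and Ne: "real N * \<epsilon> = 1"
    and w: "per N w" "avgX N w = 0"
  shows "\<bar>w i\<bar> \<le> sqrt (real N) * H1s N \<epsilon> w"
proof -
  have "\<bar>Dd \<epsilon> w j\<bar> \<le> sqrt (real N) * H1s N \<epsilon> w" for j
    using per_window_forall[OF per_Dd[OF w(1)] N, where r = 1 and P = "\<lambda>x. \<bar>x\<bar> \<le> sqrt (real N) * H1s N \<epsilon> w"]
      abs_le_sqrt_L2n[OF N] unfolding H1s_def by simp
  then have "\<bar>w (j + 1) - w j\<bar> \<le> \<epsilon> * (sqrt (real N) * H1s N \<epsilon> w)" for j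
    using eps unfolding Dd_def by (simp add: abs_div pos_divide_le_eq mult.commute)
  moreover have "(\<Sum>j = 1..int N. w j) = 0" using w(2) N unfolding avgX_def by simp
  ultimately have "\<bar>w i\<bar> \<le> real N * (\<epsilon> * (sqrt (real N) * H1s N \<epsilon> w))"
    using abs_le_of_steps_mean_zero[OF w(1) N] by blast
  then show ?thesis using Ne by (simp add: mult.assoc[symmetric])
qed

lemma H1s_zero: "H1s N \<epsilon> (\<lambda>_. 0) = 0"
  unfolding H1s_def L2n_def innerX_def Dd_def by simp

lemma innerX_le_H1s_crude:
  assumes N: "0 < N" and eps: "0 < \<epsilon>" and Ne: "real N * \<epsilon> = 1"
    and w: "per N w" "avgX N w = 0"
  shows "innerX N f w \<le> (\<Sum>i = 1..int N. \<bar>f i\<bar>) * sqrt (real N) / real N * H1s N \<epsilon> w"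
proof -
  have "(\<Sum>i = 1..int N. f i * w i) \<le> (\<Sum>i = 1..int N. \<bar>f i\<bar> * (sqrt (real N) * H1s N \<epsilon> w))"
  proof (rule sum_mono)
    fix i
    have "f i * w i \<le> \<bar>f i\<bar> * \<bar>w i\<bar>" by (simp add: abs_mult[symmetric])
    also have "\<dots> \<le> \<bar>f i\<bar> * (sqrt (real N) * H1s N \<epsilon> w)"
      using abs_le_H1s_mean_zero[OF N eps Ne w] by (simp add: mult_left_mono)
    finally show "f i * w i \<le> \<bar>f i\<bar> * (sqrt (real N) * H1s N \<epsilon> w)" .
  qed
  then show ?thesis unfolding innerX_def using N
    by (simp add: sum_distrib_right[symmetric] divide_right_mono algebra_simps)
qed

lemma bdd_above_Hm1_set:
  assumes N: "0 < N" and eps: "0 < \<epsilon>" and Ne: "real N * \<epsilon> = 1"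
  shows "bdd_above (insert 0 {innerX N f w / H1s N \<epsilon> w | w. per N w \<and> avgX N w = 0 \<and> w \<noteq> (\<lambda>_. 0)})"
proof (rule bdd_aboveI)
  define B where "B = (\<Sum>i = 1..int N. \<bar>f i\<bar>) * sqrt (real N) / real N"
  have "0 \<le> B" unfolding B_def by (simp add: sum_nonneg)
  moreover have "innerX N f w / H1s N \<epsilon> w \<le> B" if "per N w" "avgX N w = 0" for w
    using innerX_le_H1s_crude[OF N eps Ne that, of f] \<open>0 \<le> B\<close> L2n_nonneg[of N "Dd \<epsilon> w"]
    unfolding B_def[symmetric] H1s_def by (cases "L2n N (Dd \<epsilon> w) = 0") (auto simp: pos_divide_le_eq)
  ultimately show "x \<le> B" if "x \<in> insert 0 {innerX N f w / H1s N \<epsilon> w | w. per N w \<and> avgX N w = 0 \<and> w \<noteq> (\<lambda>_. 0)}" for x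
    using that by auto
qed

lemma Hm1_nonneg:
  assumes "0 < N" "0 < \<epsilon>" "real N * \<epsilon> = 1"
  shows "0 \<le> Hm1 N \<epsilon> f"
  unfolding Hm1_def by (rule cSup_upper[OF insertI1 bdd_above_Hm1_set[OF assms]])

lemma innerX_le_Hm1_H1s:
  assumes N: "0 < N" and eps: "0 < \<epsilon>" and Ne: "real N * \<epsilon> = 1"
    and u: "per N u" "avgX N u = 0"
  shows "innerX N f u \<le> Hm1 N \<epsilon> f * H1s N \<epsilon> u"
proof (cases "H1s N \<epsilon> u = 0")
  case True
  then show ?thesis using innerX_le_H1s_crude[OF N eps Ne u, of f] by simp
next
  case False
  then have pos: "0 < H1s N \<epsilon> u" using L2n_nonneg unfolding H1s_def by (metis less_eq_real_def)
  have "u \<noteq> (\<lambda>_. 0)" using False H1s_zero by metis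
  then have "innerX N f u / H1s N \<epsilon> u \<le> Hm1 N \<epsilon> f"
    unfolding Hm1_def using u by (intro cSup_upper[OF _ bdd_above_Hm1_set[OF N eps Ne]]) blast
  then show ?thesis using pos by (simp add: pos_divide_le_eq)
qed

lemma L2n_le_of_sum_sq_le:
  assumes b: "0 \<le> b" and le: "(\<Sum>i = 1..int N. (d i)\<^sup>2) \<le> b\<^sup>2 * (\<Sum>i = 1..int N. (g i)\<^sup>2)"
  shows "L2n N d \<le> b * L2n N g"
proof -
  have "(L2n N d)\<^sup>2 \<le> (b * L2n N g)\<^sup>2"
    unfolding power_mult_distrib L2n_sq using le by (simp add: divide_right_mono)
  then show ?thesis using L2n_nonneg[of N g] b by (meson power2_le_imp_le mult_nonneg_nonneg)
qed

lemma norms_of_pointwise_bound: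
  assumes eps: "0 < \<epsilon>" and M: "0 \<le> M" and g: "per N g"
    and pt: "\<And>i. \<bar>d i\<bar> \<le> \<epsilon> * M * \<bar>g i\<bar>"
  shows "H1s N \<epsilon> d \<le> 2 * M * L2n N g" and "L2n N d \<le> \<epsilon> * M * L2n N g"
proof -
  show "L2n N d \<le> \<epsilon> * M * L2n N g"
  proof (rule L2n_le_of_sum_sq_le)
    have "(d i)\<^sup>2 \<le> (\<epsilon> * M)\<^sup>2 * (g i)\<^sup>2" for i
    proof -
      have "\<bar>d i\<bar> \<le> \<bar>\<epsilon> * M * g i\<bar>" using pt[of i] eps M by (simp add: abs_mult)
      then show ?thesis by (simp add: abs_le_square_iff power_mult_distrib)
    qed
    then show "(\<Sum>i = 1..int N. (d i)\<^sup>2) \<le> (\<epsilon> * M)\<^sup>2 * (\<Sum>i = 1..int N. (g i)\<^sup>2)"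
      by (simp add: sum_distrib_left sum_mono)
  qed (use eps M in simp)
  show "H1s N \<epsilon> d \<le> 2 * M * L2n N g" unfolding H1s_def
  proof (rule L2n_le_of_sum_sq_le)
    have "(Dd \<epsilon> d i)\<^sup>2 \<le> 2 * M\<^sup>2 * ((g (i + 1))\<^sup>2 + (g i)\<^sup>2)" for i
    proof -
      have "\<bar>Dd \<epsilon> d i\<bar> \<le> (\<bar>d (i + 1)\<bar> + \<bar>d i\<bar>) / \<epsilon>" unfolding Dd_def using eps
        by (simp add: abs_div divide_right_mono abs_triangle_ineq4)
      also have "\<dots> \<le> M * (\<bar>g (i + 1)\<bar> + \<bar>g i\<bar>)"
        using pt[of i] pt[of "i + 1"] eps by (simp add: pos_divide_le_eq algebra_simps)
      finally have "(Dd \<epsilon> d i)\<^sup>2 \<le> (M * (\<bar>g (i + 1)\<bar> + \<bar>g i\<bar>))\<^sup>2"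
        by (metis abs_ge_zero power2_abs power_mono)
      also have "\<dots> \<le> M\<^sup>2 * (2 * ((g (i + 1))\<^sup>2 + (g i)\<^sup>2))"
      proof -
        have "0 \<le> (\<bar>g (i + 1)\<bar> - \<bar>g i\<bar>)\<^sup>2" by simp
        then have "(\<bar>g (i + 1)\<bar> + \<bar>g i\<bar>)\<^sup>2 \<le> 2 * ((g (i + 1))\<^sup>2 + (g i)\<^sup>2)"
          by (simp add: power2_eq_square algebra_simps)
        then show ?thesis unfolding power_mult_distrib by (simp add: mult_left_mono)
      qed
      finally show ?thesis by (simp only: mult_ac)
    qed
    then have "(\<Sum>i = 1..int N. (Dd \<epsilon> d i)\<^sup>2)
        \<le> 2 * M\<^sup>2 * ((\<Sum>i = 1..int N. (g (i + 1))\<^sup>2) + (\<Sum>i = 1..int N. (g i)\<^sup>2))"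
      unfolding sum.distrib[symmetric] sum_distrib_left by (rule sum_mono)
    also have "(\<Sum>i = 1..int N. (g (i + 1))\<^sup>2) = (\<Sum>i = 1..int N. (g i)\<^sup>2)"
      using sum_per_shift[of N "\<lambda>i. (g i)\<^sup>2"] g unfolding per_def by simp
    finally show "(\<Sum>i = 1..int N. (Dd \<epsilon> d i)\<^sup>2) \<le> (2 * M)\<^sup>2 * (\<Sum>i = 1..int N. (g i)\<^sup>2)"
      by (simp add: power_mult_distrib)
  qed (use M in simp)
qed

section \<open>Stability of the HQC solution\<close>

lemma H1s_sq_UH_per:
  assumes m: "mesh N K idx" and u: "UH_per N K idx u" and Ne: "real N * \<epsilon> = 1"
  shows "(H1s N \<epsilon> u)\<^sup>2 = (\<Sum>k = 1..K. Hk \<epsilon> idx k * (slope idx u k / \<epsilon>)\<^sup>2)"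
proof -
  have seg: "\<epsilon> * (\<Sum>i = idx k..idx (k + 1) - 1. (Dd \<epsilon> u i)\<^sup>2) = Hk \<epsilon> idx k * (slope idx u k / \<epsilon>)\<^sup>2"
    if k: "k \<in> {1..K}" for k
  proof -
    have "(\<Sum>i = idx k..idx (k + 1) - 1. (Dd \<epsilon> u i)\<^sup>2) = (\<Sum>i = idx k..idx (k + 1) - 1. (slope idx u k / \<epsilon>)\<^sup>2)"
      using UH_per_step[OF u m k] unfolding Dd_def by (intro sum.cong) auto
    moreover have "idx k < idx (k + 1)" using m k unfolding mesh_def by auto
    ultimately show ?thesis unfolding Hk_def by (simp add: of_nat_nat)
  qed
  have "real N \<noteq> 0" using Ne by (metis mult_eq_0_iff zero_neq_one)
  then have "\<epsilon> = 1 / real N" using Ne by (simp add: field_simps)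
  then have "(H1s N \<epsilon> u)\<^sup>2 = \<epsilon> * (\<Sum>i = 1..int N. (Dd \<epsilon> u i)\<^sup>2)"
    unfolding H1s_def L2n_sq by simp
  also have "\<dots> = (\<Sum>k = 1..K. \<epsilon> * (\<Sum>i = idx k..idx (k + 1) - 1. (Dd \<epsilon> u i)\<^sup>2))"
    unfolding sum_mesh_segments[OF m, symmetric] sum_distrib_left ..
  also have "\<dots> = (\<Sum>k = 1..K. Hk \<epsilon> idx k * (slope idx u k / \<epsilon>)\<^sup>2)" by (rule sum.cong[OF refl seg])
  finally show ?thesis .
qed

lemma innerRep_Rk_ge:
  assumes cs: "cell_sol N p \<psi> \<chi>" and p: "0 < p" and eps: "0 < \<epsilon>" and c: "0 < c"
    and bnd: "\<forall>i j. c \<le> \<psi> i j \<and> \<psi> i j \<le> C"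
  shows "(slope idx u k / \<epsilon>)\<^sup>2 * (c\<^sup>2 / C)
    \<le> innerRep p (rep k) (\<lambda>i. \<psi> (coll k) i * Dd \<epsilon> (Rk \<epsilon> p \<psi> idx rep coll u k) i)
         (Dd \<epsilon> (Rk \<epsilon> p \<psi> idx rep coll u k))"
proof -
  let ?s = "slope idx u k / \<epsilon>" and ?q = "harm_mean p (\<psi> (coll k))" and ?R = "Rk \<epsilon> p \<psi> idx rep coll u k"
  have pos: "\<forall>i j. 0 < \<psi> i j" using bnd c by (meson less_le_trans)
  have q: "c \<le> ?q" using harm_mean_bounds(1)[of c p "\<psi> (coll k)" C] c p bnd by blast
  have "?s\<^sup>2 * (c\<^sup>2 / C) \<le> \<psi> (coll k) i * Dd \<epsilon> ?R i * Dd \<epsilon> ?R i" for i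
  proof -
    have flux: "\<psi> (coll k) i * Dd \<epsilon> ?R i = ?s * ?q" by (rule flux_Rk[OF cs p eps pos])
    have "c\<^sup>2 / C \<le> ?q\<^sup>2 / \<psi> (coll k) i"
      using q c pos bnd by (intro frac_le) (auto intro: power_mono)
    then have "?s\<^sup>2 * (c\<^sup>2 / C) \<le> ?s\<^sup>2 * (?q\<^sup>2 / \<psi> (coll k) i)" by (rule mult_left_mono) simp
    also have "\<dots> = (?s * ?q) * (?s * ?q / \<psi> (coll k) i)" by (simp add: power2_eq_square mult_ac)
    also have "?s * ?q / \<psi> (coll k) i = Dd \<epsilon> ?R i"
      using flux pos by (metis less_irrefl nonzero_mult_div_cancel_left)
    finally show ?thesis unfolding flux .
  qed
  then have "(\<Sum>i = rep k..rep k + int p - 1. ?s\<^sup>2 * (c\<^sup>2 / C))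
      \<le> (\<Sum>i = rep k..rep k + int p - 1. \<psi> (coll k) i * Dd \<epsilon> ?R i * Dd \<epsilon> ?R i)"
    by (rule sum_mono)
  then show ?thesis unfolding innerRep_def using p by (simp add: pos_le_divide_eq mult.commute)
qed

lemma aHQC_coercive:
  assumes cs: "cell_sol N p \<psi> \<chi>" and p: "0 < p" and eps: "0 < \<epsilon>" and c: "0 < c"
    and bnd: "\<forall>i j. c \<le> \<psi> i j \<and> \<psi> i j \<le> C" and Ne: "real N * \<epsilon> = 1"
    and m: "mesh N K idx" and u: "UH_per N K idx u"
  shows "c\<^sup>2 / C * (H1s N \<epsilon> u)\<^sup>2 \<le> aHQC \<epsilon> p K \<psi> idx rep coll u u"
proof -
  have "0 \<le> Hk \<epsilon> idx k" if "k \<in> {1..K}" for k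
    using m that eps unfolding mesh_def Hk_def by (auto intro!: mult_nonneg_nonneg less_imp_le)
  then have "(\<Sum>k = 1..K. Hk \<epsilon> idx k * ((slope idx u k / \<epsilon>)\<^sup>2 * (c\<^sup>2 / C)))
      \<le> aHQC \<epsilon> p K \<psi> idx rep coll u u"
    unfolding aHQC_def by (intro sum_mono mult_left_mono innerRep_Rk_ge[OF cs p eps c bnd])
  moreover have "(\<Sum>k = 1..K. Hk \<epsilon> idx k * ((slope idx u k / \<epsilon>)\<^sup>2 * (c\<^sup>2 / C)))
      = c\<^sup>2 / C * (\<Sum>k = 1..K. Hk \<epsilon> idx k * (slope idx u k / \<epsilon>)\<^sup>2)"
    by (simp add: sum_distrib_left mult_ac)
  ultimately show ?thesis unfolding H1s_sq_UH_per[OF m u Ne] by simp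
qed

lemma H1s_HQC_sol_le:
  assumes cs: "cell_sol N p \<psi> \<chi>" and p: "0 < p" and eps: "0 < \<epsilon>" and c: "0 < c"
    and bnd: "\<forall>i j. c \<le> \<psi> i j \<and> \<psi> i j \<le> C" and N: "0 < N" and Ne: "real N * \<epsilon> = 1"
    and m: "mesh N K idx" and sol: "HQC_sol N \<epsilon> p K \<psi> idx rep coll f u"
  shows "H1s N \<epsilon> u \<le> C / c\<^sup>2 * Hm1 N \<epsilon> f"
proof -
  have u: "UH_per N K idx u" "per N u" "avgX N u = 0"
    using sol unfolding HQC_sol_def UH_sharp_def UH_per_def by auto
  have C: "0 < C" using bnd c by (meson less_le_trans)
  let ?h = "H1s N \<epsilon> u"
  have "aHQC \<epsilon> p K \<psi> idx rep coll u u = innerX N f u" using sol unfolding HQC_sol_def by blast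
  then have "c\<^sup>2 / C * ?h\<^sup>2 \<le> innerX N f u" using aHQC_coercive[OF cs p eps c bnd Ne m u(1), of rep coll] by simp
  also have "\<dots> \<le> Hm1 N \<epsilon> f * ?h" by (rule innerX_le_Hm1_H1s[OF N eps Ne u(2,3)])
  finally have le: "(c\<^sup>2 / C * ?h) * ?h \<le> Hm1 N \<epsilon> f * ?h" by (simp add: power2_eq_square mult.assoc)
  have "c\<^sup>2 / C * ?h \<le> Hm1 N \<epsilon> f"
  proof (cases "?h = 0")
    case True then show ?thesis using Hm1_nonneg[OF N eps Ne, of f] by simp
  next
    case False
    then have "0 < ?h" using L2n_nonneg unfolding H1s_def by (metis less_eq_real_def)
    then show ?thesis by (rule mult_right_le_imp_le[OF le])
  qed
  then show ?thesis using c C by (simp add: field_simps)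
qed

section \<open>Reconstruction error\<close>

lemma recon_error_on_segment:
  assumes cs: "cell_sol N p \<psi> \<chi>" and p: "0 < p" and eps: "0 < \<epsilon>" and pos: "\<forall>i j. 0 < \<psi> i j"
    and m: "mesh N K idx" and u: "UH_per N K idx u"
    and k: "k \<in> {1..K}" "idx k \<le> i" "i < idx (k + 1)"
  shows "uhat \<epsilon> \<chi> u i - recon N \<epsilon> p K \<psi> idx rep coll u i = \<epsilon> * Dd \<epsilon> u i * (\<chi> i i - \<chi> (coll k) i)"
proof -
  have "\<epsilon> * Dd \<epsilon> u i = slope idx u k" unfolding Dd_def using UH_per_step[OF u m k] eps by simp
  then show ?thesis
    unfolding uhat_def recon_on_segment[OF m k] corr_eq_slope_cell_sol[OF cs p eps pos]
    by (simp add: algebra_simps)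
qed

text \<open>The reconstruction freezes the slow variable of the cell solution at the collocation
  point, which lies in the same segment: this costs the Lipschitz constant of the cell solution
  times the segment length.\<close>
lemma recon_error_pointwise:
  assumes cs: "cell_sol N p \<psi> \<chi>" and p: "0 < p" and N: "0 < N" and eps: "0 < \<epsilon>"
    and c: "0 < c" and bnd: "\<forall>i j. c \<le> \<psi> i j \<and> \<psi> i j \<le> C"
    and ts: "two_scale N p \<psi>" and L: "Linf N p (DX \<epsilon> \<psi>) \<le> C'"
    and m: "mesh N K idx" and sa: "sampling p K idx rep coll" and u: "UH_per N K idx u"
    and i: "1 \<le> i" "i \<le> int N"
  shows "\<bar>uhat \<epsilon> \<chi> u i - recon N \<epsilon> p K \<psi> idx rep coll u i\<bar>
    \<le> \<epsilon> * (real p * ((C\<^sup>2 / c ^ 3 + C / c\<^sup>2) * C') * Hmax \<epsilon> K idx) * \<bar>Dd \<epsilon> u i\<bar>"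
proof -
  define A where "A = C\<^sup>2 / c ^ 3 + C / c\<^sup>2"
  have "0 \<le> C" using bnd c by (meson less_le_trans less_imp_le)
  then have A: "0 \<le> A" unfolding A_def using c by simp
  have C': "0 \<le> C'" using abs_le_Linf[of 1 N 1 p "DX \<epsilon> \<psi>"] N p L by simp
  have pos: "\<forall>i j. 0 < \<psi> i j" using bnd c by (meson less_le_trans)
  obtain k where k: "k \<in> {1..K}" "idx k \<le> i" "i < idx (k + 1)"
    using mesh_segment_exists[OF m i] .
  have "idx k \<le> coll k" "coll k < idx (k + 1)" using sa k(1) unfolding sampling_def by fastforce+
  then have "\<bar>i - coll k\<bar> \<le> idx (k + 1) - idx k" using k by (simp add: abs_le_iff)
  then have "\<epsilon> * \<bar>real_of_int (i - coll k)\<bar> \<le> Hk \<epsilon> idx k"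
    unfolding Hk_def using eps by (simp add: of_int_abs[symmetric] del: of_int_abs)
  also have "\<dots> \<le> Hmax \<epsilon> K idx" by (rule Hk_le_Hmax[OF k(1)])
  finally have dist: "C' * \<epsilon> * \<bar>real_of_int (i - coll k)\<bar> \<le> C' * Hmax \<epsilon> K idx"
    using C' by (simp add: mult.assoc mult_left_mono)
  have "\<bar>\<chi> i i - \<chi> (coll k) i\<bar> \<le> real p * (A * (C' * \<epsilon> * \<bar>real_of_int (i - coll k)\<bar>))"
    unfolding A_def by (rule cell_sol_diff_le[OF cs p c bnd two_scale_lipschitz_X[OF ts N p eps L]])
  also have "\<dots> \<le> real p * (A * (C' * Hmax \<epsilon> K idx))" using dist A by (simp add: mult_left_mono)
  finally have "\<epsilon> * \<bar>Dd \<epsilon> u i\<bar> * \<bar>\<chi> i i - \<chi> (coll k) i\<bar> \<le> \<epsilon> * \<bar>Dd \<epsilon> u i\<bar> * (real p * (A * (C' * Hmax \<epsilon> K idx)))"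
    using eps by (simp add: mult_left_mono)
  then show ?thesis
    unfolding recon_error_on_segment[OF cs p eps pos m u k] A_def[symmetric] using eps by (simp add: abs_mult mult_ac)
qed

lemma per_recon_error:
  assumes cs: "cell_sol N p \<psi> \<chi>" and pN: "p dvd N" and u: "per N u"
  shows "per N (\<lambda>i. uhat \<epsilon> \<chi> u i - recon N \<epsilon> p K \<psi> idx rep coll u i)"
  unfolding per_def
proof
  fix i
  obtain t where t: "int N = int p * t" using pN by (metis dvd_def of_nat_mult)
  have ts: "two_scale N p \<chi>" using cs unfolding cell_sol_def by blast
  then have "\<chi> (i + int N) (i + int N) = \<chi> i (i + int p * t)" unfolding two_scale_def t by simp
  also have "\<dots> = \<chi> i i" using ts unfolding two_scale_def per_def by (intro per_add_mult) (simp add: per_def)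
  finally have "uhat \<epsilon> \<chi> u (i + int N) = uhat \<epsilon> \<chi> u i"
    using u per_Dd[OF u, of \<epsilon>] unfolding uhat_def per_def by simp
  moreover have "(i + int N - 1) mod int N = (i - 1) mod int N"
    by (metis add.commute add_diff_eq mod_add_self1)
  ultimately show "uhat \<epsilon> \<chi> u (i + int N) - recon N \<epsilon> p K \<psi> idx rep coll u (i + int N)
      = uhat \<epsilon> \<chi> u i - recon N \<epsilon> p K \<psi> idx rep coll u i"
    unfolding recon_def by simp
qed

lemma recon_error_norms:
  assumes eps: "0 < \<epsilon>" and N: "0 < N" and p: "0 < p" and pN: "p dvd N" and Ne: "real N * \<epsilon> = 1"
    and ts: "two_scale N p \<psi>" and c: "0 < c" and bnd: "\<forall>i j. c \<le> \<psi> i j \<and> \<psi> i j \<le> C"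
    and L: "Linf N p (DX \<epsilon> \<psi>) \<le> C'" and cs: "cell_sol N p \<psi> \<chi>"
    and m: "mesh N K idx" and sa: "sampling p K idx rep coll"
    and sol: "HQC_sol N \<epsilon> p K \<psi> idx rep coll f u"
  defines "A \<equiv> real p * ((C\<^sup>2 / c ^ 3 + C / c\<^sup>2) * C') * (C / c\<^sup>2)"
    and "d \<equiv> \<lambda>i. uhat \<epsilon> \<chi> u i - recon N \<epsilon> p K \<psi> idx rep coll u i"
  shows "H1s N \<epsilon> d \<le> 2 * A * Hmax \<epsilon> K idx * Hm1 N \<epsilon> f"
    and "L2n N d \<le> A * \<epsilon> * Hmax \<epsilon> K idx * Hm1 N \<epsilon> f"
proof -
  define M where "M = real p * ((C\<^sup>2 / c ^ 3 + C / c\<^sup>2) * C') * Hmax \<epsilon> K idx"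
  have u: "UH_per N K idx u" "per N u" using sol unfolding HQC_sol_def UH_sharp_def UH_per_def by auto
  have C: "0 < C" using bnd c by (meson less_le_trans)
  have "0 \<le> C'" using abs_le_Linf[of 1 N 1 p "DX \<epsilon> \<psi>"] N p L by simp
  then have M: "0 \<le> M" unfolding M_def using C c Hmax_nonneg[OF m eps] by simp
  have "per N (\<lambda>i. \<bar>d i\<bar> - \<epsilon> * M * \<bar>Dd \<epsilon> u i\<bar>)"
    using per_recon_error[OF cs pN u(2)] per_Dd[OF u(2)] unfolding d_def per_def by simp
  then have "\<bar>d i\<bar> - \<epsilon> * M * \<bar>Dd \<epsilon> u i\<bar> \<le> 0" for i
    using per_window_forall[OF _ N, where r = 1 and P = "\<lambda>x. x \<le> 0"
        and F = "\<lambda>i. \<bar>d i\<bar> - \<epsilon> * M * \<bar>Dd \<epsilon> u i\<bar>"]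
      recon_error_pointwise[OF cs p N eps c bnd ts L m sa u(1)] unfolding d_def M_def by simp
  then have "\<bar>d i\<bar> \<le> \<epsilon> * M * \<bar>Dd \<epsilon> u i\<bar>" for i by simp
  note norms = norms_of_pointwise_bound[OF eps M per_Dd[OF u(2)] this]
  have h: "L2n N (Dd \<epsilon> u) \<le> C / c\<^sup>2 * Hm1 N \<epsilon> f"
    using H1s_HQC_sol_le[OF cs p eps c bnd N Ne m sol] unfolding H1s_def .
  have "H1s N \<epsilon> d \<le> 2 * M * (C / c\<^sup>2 * Hm1 N \<epsilon> f)"
    using norms(1) mult_left_mono[OF h, of "2 * M"] M by simp
  then show "H1s N \<epsilon> d \<le> 2 * A * Hmax \<epsilon> K idx * Hm1 N \<epsilon> f"
    unfolding A_def M_def by (simp only: mult_ac)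
  have "L2n N d \<le> \<epsilon> * M * (C / c\<^sup>2 * Hm1 N \<epsilon> f)"
    using norms(2) mult_left_mono[OF h, of "\<epsilon> * M"] M eps by simp
  then show "L2n N d \<le> A * \<epsilon> * Hmax \<epsilon> K idx * Hm1 N \<epsilon> f"
    unfolding A_def M_def by (simp only: mult_ac)
qed

theorem lemma6p10:
  fixes c\<psi> C\<psi> C'\<psi> :: real and p :: nat
  shows "\<exists>C13 C14 :: real. \<forall>(N::nat) (\<epsilon>::real) \<psi> \<chi> f K idx rep coll uH.
     0 < \<epsilon> \<and> 0 < N \<and> 0 < p \<and> p dvd N \<and> real N * \<epsilon> = 1
     \<and> two_scale N p \<psi> \<and> 0 < c\<psi> \<and> (\<forall>i j. c\<psi> \<le> \<psi> i j \<and> \<psi> i j \<le> C\<psi>)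
     \<and> Linf N p (DX \<epsilon> \<psi>) \<le> C'\<psi>
     \<and> cell_sol N p \<psi> \<chi>
     \<and> per N f \<and> avgX N f = 0
     \<and> mesh N K idx \<and> sampling p K idx rep coll
     \<and> HQC_sol N \<epsilon> p K \<psi> idx rep coll f uH
     \<longrightarrow>
       H1s N \<epsilon> (\<lambda>i. uhat \<epsilon> \<chi> uH i - recon N \<epsilon> p K \<psi> idx rep coll uH i)
         \<le> C13 * Hmax \<epsilon> K idx * Hm1 N \<epsilon> f
     \<and> L2n N (\<lambda>i. uhat \<epsilon> \<chi> uH i - recon N \<epsilon> p K \<psi> idx rep coll uH i)
         \<le> C14 * \<epsilon> * Hmax \<epsilon> K idx * Hm1 N \<epsilon> f"
proof -
  define A where "A = real p * ((C\<psi>\<^sup>2 / c\<psi> ^ 3 + C\<psi> / c\<psi>\<^sup>2) * C'\<psi>) * (C\<psi> / c\<psi>\<^sup>2)"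
  show ?thesis
    by (intro exI[of _ "2 * A"] exI[of _ A] allI impI; elim conjE; unfold A_def;
        intro conjI recon_error_norms; assumption)
qed

end
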